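(* Let $\rho\in(0,1)$ and $\lambda=\frac{1-\rho}{1+\rho}$. Let $(x_i)_{i\in\mathbb Z}$ be real numbers with $|x_i|<M$ for all $i$, for some constant $M<\infty$. Define $y_i(k)$ for all $i\in\mathbb Z$ and $k\ge 0$ by $y_i(0)=\lambda x_i$; $y_i(1)=y_i(0)+\rho\,(y_{i-1}(0)+y_{i+1}(0))$; $y_i(2)=y_i(1)+\rho\,(y_{i-1}(1)-y_{i-1}(0))+\rho\,(y_{i+1}(1)-y_{i+1}(0))-2\rho^2 y_i(0)$; and for $k\ge 2$, $y_i(k+1)=y_i(k)+\rho\,(y_{i-1}(k)-y_{i-1}(k-1))+\rho\,(y_{i+1}(k)-y_{i+1}(k-1))-\rho^2\,(y_i(k-1)-y_i(k-2))$. Then for every $i\in\mathbb Z$, $$\lim_{k\to\infty}y_i(k)=\frac{1-\rho}{1+\rho}\Big(x_i+\sum_{j=1}^\infty\rho^j\,(x_{i-j}+x_{i+j})\Big).$$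
   Context: Sensors indexed by $i\in\mathbb Z$ are placed along a line; sensor $i$ holds a time-invariant measurement $x_i$ and a consensus variable $y_i(k)$ at discrete times $k=0,1,2,\dots$; sensor $i$ may only use its own values and those of sensors $i-1$ and $i+1$. *)

theory Defs
  imports "HOL-Analysis.Analysis"
begin

end

theory Submission
  imports Defs
begin

(* Write s_i(m) = x_(i-m) + x_(i+m). The increments d_i(k) = y_i(k+1) - y_i(k) obey
  d_i(k) = \<rho> (d_(i-1)(k-1) + d_(i+1)(k-1)) - \<rho>^2 d_i(k-2), and since
  s_(i-1)(m+1) + s_(i+1)(m+1) = s_i(m+2) + s_i(m), the \<rho>^2 term exactly cancels the part of
  the information travelling back towards sensor i, leaving d_i(k) = \<lambda> \<rho>^(k+1) s_i(k+1).
  So y_i(k) is the k-th partial sum of the limit series, which converges because x is bounded. *)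

definition shell :: "(int \<Rightarrow> 'a::plus) \<Rightarrow> int \<Rightarrow> nat \<Rightarrow> 'a" where
  "shell x i m = x (i - int m) + x (i + int m)"

lemma shell_neighbours:
  fixes x :: "int \<Rightarrow> 'a::ab_semigroup_add"
  shows "shell x (i - 1) (Suc m) + shell x (i + 1) (Suc m) = shell x i (Suc (Suc m)) + shell x i m"
proof -
  have "i - 1 - int (Suc m) = i - int (Suc (Suc m))" "i - 1 + int (Suc m) = i + int m"
    "i + 1 - int (Suc m) = i - int m" "i + 1 + int (Suc m) = i + int (Suc (Suc m))"
    by simp_all
  then show ?thesis
    unfolding shell_def by (simp only:) (simp add: ac_simps)
qed

lemma consensus_increment:
  fixes \<rho> lam :: real and x :: "int \<Rightarrow> real" and y :: "int \<Rightarrow> nat \<Rightarrow> real"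
  assumes y0: "\<And>i. y i 0 = lam * x i"
    and y1: "\<And>i. y i 1 = y i 0 + \<rho> * (y (i - 1) 0 + y (i + 1) 0)"
    and y2: "\<And>i. y i 2 = y i 1 + \<rho> * (y (i - 1) 1 - y (i - 1) 0)
                 + \<rho> * (y (i + 1) 1 - y (i + 1) 0) - 2 * \<rho>\<^sup>2 * y i 0"
    and yk: "\<And>i k. k \<ge> 2 \<Longrightarrow> y i (k + 1) = y i k + \<rho> * (y (i - 1) k - y (i - 1) (k - 1))
                 + \<rho> * (y (i + 1) k - y (i + 1) (k - 1)) - \<rho>\<^sup>2 * (y i (k - 1) - y i (k - 2))"
  shows "y i (Suc k) - y i k = lam * \<rho> ^ Suc k * shell x i (Suc k)"
proof (induction k arbitrary: i rule: less_induct)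
  case (less k)
  consider "k = 0" | "k = 1" | n where "k = Suc (Suc n)"
    by (metis One_nat_def not0_implies_Suc)
  then show ?case
  proof cases
    case 1
    then show ?thesis
      using y1[of i] by (simp add: y0 shell_def algebra_simps)
  next
    case 2
    have "y i 2 - y i 1 = \<rho> * (lam * \<rho> * (shell x (i - 1) 1 + shell x (i + 1) 1)) - 2 * \<rho>\<^sup>2 * lam * x i"
      using y2[of i] less[of 0 "i - 1"] less[of 0 "i + 1"] 2 by (simp add: y0 algebra_simps)
    also have "\<dots> = lam * \<rho> ^ 2 * shell x i 2"
      using shell_neighbours[of x i 0] by (simp add: shell_def power2_eq_square algebra_simps)
    finally show ?thesis
      using 2 by (simp add: numeral_2_eq_2)
  next
    case 3
    have "y i (Suc k) - y i k = \<rho> * (y (i - 1) (Suc (Suc n)) - y (i - 1) (Suc n))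
        + \<rho> * (y (i + 1) (Suc (Suc n)) - y (i + 1) (Suc n)) - \<rho>\<^sup>2 * (y i (Suc n) - y i n)"
      using yk[of "Suc (Suc n)" i] 3 by simp
    also have "\<dots> = lam * \<rho> ^ Suc (Suc n) * \<rho> * (shell x (i - 1) (Suc (Suc n)) + shell x (i + 1) (Suc (Suc n)))
        - lam * \<rho> ^ Suc (Suc n) * \<rho> * shell x i (Suc n)"
      using 3 less[of "Suc n" "i - 1"] less[of "Suc n" "i + 1"] less[of n i]
      by (simp add: power2_eq_square algebra_simps)
    also have "\<dots> = lam * \<rho> ^ Suc k * shell x i (Suc k)"
      using 3 shell_neighbours[of x i "Suc n"] by (simp add: algebra_simps)
    finally show ?thesis .
  qed
qed

lemma consensus_partial_sum:
  fixes \<rho> lam :: real and x :: "int \<Rightarrow> real" and y :: "int \<Rightarrow> nat \<Rightarrow> real"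
  assumes y0: "\<And>i. y i 0 = lam * x i"
    and increment: "\<And>i k. y i (Suc k) - y i k = lam * \<rho> ^ Suc k * shell x i (Suc k)"
  shows "y i k = lam * (x i + (\<Sum>j<k. \<rho> ^ (j + 1) * shell x i (j + 1)))"
proof (induction k)
  case 0
  then show ?case by (simp add: y0)
next
  case (Suc k)
  then show ?case
    using increment[of i k] by (simp add: algebra_simps)
qed

lemma summable_shell:
  fixes \<rho> M :: real and x :: "int \<Rightarrow> real"
  assumes "\<bar>\<rho>\<bar> < 1" and "\<And>i. \<bar>x i\<bar> \<le> M"
  shows "summable (\<lambda>j. \<rho> ^ (j + 1) * shell x i (j + 1))"
proof (rule summable_comparison_test)
  show "\<exists>N. \<forall>j\<ge>N. norm (\<rho> ^ (j + 1) * shell x i (j + 1)) \<le> 2 * M * \<bar>\<rho>\<bar> ^ (j + 1)"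
  proof (intro exI allI impI)
    fix j :: nat
    have "\<bar>shell x i (j + 1)\<bar> \<le> 2 * M"
      unfolding shell_def using assms(2)[of "i - int (j + 1)"] assms(2)[of "i + int (j + 1)"] by linarith
    then have "\<bar>\<rho>\<bar> ^ (j + 1) * \<bar>shell x i (j + 1)\<bar> \<le> \<bar>\<rho>\<bar> ^ (j + 1) * (2 * M)"
      by (simp add: mult_left_mono)
    then show "norm (\<rho> ^ (j + 1) * shell x i (j + 1)) \<le> 2 * M * \<bar>\<rho>\<bar> ^ (j + 1)"
      by (simp add: abs_mult power_abs mult.commute)
  qed
  show "summable (\<lambda>j. 2 * M * \<bar>\<rho>\<bar> ^ (j + 1))"
    using assms(1) by (intro summable_mult summable_mult2 summable_geometric) simp
qed

theorem theorem1:
  fixes \<rho> lam M :: real and x :: "int \<Rightarrow> real" and y :: "int \<Rightarrow> nat \<Rightarrow> real"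
  assumes rho: "0 < \<rho>" "\<rho> < 1"
    and lam: "lam = (1 - \<rho>) / (1 + \<rho>)"
    and bnd: "\<And>i. \<bar>x i\<bar> < M"
    and y0: "\<And>i. y i 0 = lam * x i"
    and y1: "\<And>i. y i 1 = y i 0 + \<rho> * (y (i - 1) 0 + y (i + 1) 0)"
    and y2: "\<And>i. y i 2 = y i 1 + \<rho> * (y (i - 1) 1 - y (i - 1) 0)
                 + \<rho> * (y (i + 1) 1 - y (i + 1) 0) - 2 * \<rho>\<^sup>2 * y i 0"
    and yk: "\<And>i k. k \<ge> 2 \<Longrightarrow> y i (k + 1) = y i k + \<rho> * (y (i - 1) k - y (i - 1) (k - 1))
                 + \<rho> * (y (i + 1) k - y (i + 1) (k - 1)) - \<rho>\<^sup>2 * (y i (k - 1) - y i (k - 2))"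
  shows "\<forall>i. (\<lambda>k. y i k) \<longlonglongrightarrow>
           (1 - \<rho>) / (1 + \<rho>) * (x i + (\<Sum>j. \<rho> ^ (j + 1) * (x (i - int (j + 1)) + x (i + int (j + 1)))))"
proof
  fix i
  have partial: "y i k = lam * (x i + (\<Sum>j<k. \<rho> ^ (j + 1) * shell x i (j + 1)))" for k
    using consensus_partial_sum[OF y0 consensus_increment[OF y0 y1 y2 yk]] .
  have "summable (\<lambda>j. \<rho> ^ (j + 1) * shell x i (j + 1))"
    using rho bnd by (intro summable_shell[where M = M]) (auto intro: less_imp_le)
  then have "(\<lambda>k. lam * (x i + (\<Sum>j<k. \<rho> ^ (j + 1) * shell x i (j + 1))))
      \<longlonglongrightarrow> lam * (x i + (\<Sum>j. \<rho> ^ (j + 1) * shell x i (j + 1)))"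
    by (intro tendsto_intros summable_LIMSEQ)
  then show "(\<lambda>k. y i k) \<longlonglongrightarrow>
           (1 - \<rho>) / (1 + \<rho>) * (x i + (\<Sum>j. \<rho> ^ (j + 1) * (x (i - int (j + 1)) + x (i + int (j + 1)))))"
    by (simp add: partial lam shell_def)
qed

end
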